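(* Let $n\ge1$ be an integer, $I,\Lambda$ non-empty sets, $P$ a $\Lambda\times I$ matrix with entries in $\mathbb{Z}_{n}\cup\{\mathbf{0}\}$, and $S=M^{0}[\mathbb{Z}_{n};I,\Lambda;P]$. Let $A$ be a finite alphabet, $\varphi:A\to S$ any map, and $\bar\varphi:A^{+}\to S$ its unique extension to a semigroup morphism. Then for every non-zero element $s=(i,g,\lambda)\in S$, the language $s\bar\varphi^{-1}\subseteq A^{+}$ has generalised star-height at most $1$.
   Context: $\mathbb{Z}_n$ is the cyclic group of order $n$ written additively. For a group $G$, non-empty sets $I,\Lambda$ and a $\Lambda\times I$ matrix $P=(p_{\lambda i})$ with entries in $G\cup\{\mathbf{0}\}$ ($\mathbf{0}$ a new symbol), the Rees zero-matrix semigroup $M^{0}[G;I,\Lambda;P]$ is $(I\times G\times\Lambda)\cup\{\mathbf{0}\}$ with $(i,g,\lambda)(j,h,\mu)=(i,g\,p_{\lambda j}\,h,\mu)$ if $p_{\lambda j}\ne\mathbf{0}$, $=\mathbf{0}$ if $p_{\lambda j}=\mathbf{0}$, and $x\mathbf{0}=\mathbf{0}x=\mathbf{0}$. Generalised regular expressions over $A$: $\emptyset$, $\varepsilon$ and each letter are expressions; if $E,F$ are expressions so are $E\cup F$, $EF$, $E^{\ast}$, $E^{c}$ (complement in $A^{\ast}$). Star-height: $h(\emptyset)=h(\varepsilon)=h(a)=0$, $h(E\cup F)=h(EF)=\max\{h(E),h(F)\}$, $h(E^{\ast})=h(E)+1$, $h(E^{c})=h(E)$; the star-height of a language is the minimum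 of $h(E)$ over expressions $E$ representing it. *)

theory Defs
  imports Main
begin

text \<open>Z_n is represented by {0..<n} with addition mod n.
 Elements of M0[Z_n; I, Lambda; P] are represented as 'i \<times> nat \<times> 'l option:
 None is the zero, Some (i, g, l) is the triple (i, g, l).
 The sandwich matrix P is a function 'l \<Rightarrow> 'i \<Rightarrow> nat option, None being the symbol 0.\<close>

type_synonym ('i, 'l) rees_elt = "('i \<times> nat \<times> 'l) option"

definition rees_carrier :: "nat \<Rightarrow> 'i set \<Rightarrow> 'l set \<Rightarrow> ('i, 'l) rees_elt set" where
  "rees_carrier n I L = {None} \<union> Some ` (I \<times> {0..<n} \<times> L)"

fun rees_mult :: "nat \<Rightarrow> ('l \<Rightarrow> 'i \<Rightarrow> nat option) \<Rightarrow> ('i, 'l) rees_elt \<Rightarrow> ('i, 'l) rees_elt \<Rightarrow> ('i, 'l) rees_elt" where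
  "rees_mult n P (Some (i, g, l)) (Some (j, h, m)) =
     (case P l j of None \<Rightarrow> None | Some p \<Rightarrow> Some (i, (g + p + h) mod n, m))"
| "rees_mult n P _ _ = None"

definition valid_sandwich :: "nat \<Rightarrow> 'i set \<Rightarrow> 'l set \<Rightarrow> ('l \<Rightarrow> 'i \<Rightarrow> nat option) \<Rightarrow> bool" where
  "valid_sandwich n I L P \<longleftrightarrow> (\<forall>l\<in>L. \<forall>i\<in>I. \<forall>p. P l i = Some p \<longrightarrow> p < n)"

text \<open>The extension of phi : A \<rightarrow> S to the semigroup morphism A^+ \<rightarrow> S
  (only meaningful on non-empty words).\<close>
fun phibar :: "nat \<Rightarrow> ('l \<Rightarrow> 'i \<Rightarrow> nat option) \<Rightarrow> ('a \<Rightarrow> ('i, 'l) rees_elt) \<Rightarrow> 'a list \<Rightarrow> ('i, 'l) rees_elt" where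
  "phibar n P phi [] = None"
| "phibar n P phi [a] = phi a"
| "phibar n P phi (a # b # w) = rees_mult n P (phi a) (phibar n P phi (b # w))"

definition plus_words :: "'a set \<Rightarrow> 'a list set" where
  "plus_words A = {w. w \<in> lists A \<and> w \<noteq> []}"

datatype 'a gre = Empty | Eps | Atom 'a | Union "'a gre" "'a gre" | Conc "'a gre" "'a gre"
  | Star "'a gre" | Compl "'a gre"

fun atoms :: "'a gre \<Rightarrow> 'a set" where
  "atoms Empty = {}"
| "atoms Eps = {}"
| "atoms (Atom a) = {a}"
| "atoms (Union e f) = atoms e \<union> atoms f"
| "atoms (Conc e f) = atoms e \<union> atoms f"
| "atoms (Star e) = atoms e"
| "atoms (Compl e) = atoms e"

definition conc_lang :: "'a list set \<Rightarrow> 'a list set \<Rightarrow> 'a list set" where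
  "conc_lang X Y = {u @ v | u v. u \<in> X \<and> v \<in> Y}"

inductive_set star_lang :: "'a list set \<Rightarrow> 'a list set" for X where
  star_nil: "[] \<in> star_lang X"
| star_app: "u \<in> X \<Longrightarrow> v \<in> star_lang X \<Longrightarrow> u @ v \<in> star_lang X"

text \<open>Language of an expression over alphabet A; complement is taken in A^*.\<close>
fun lang :: "'a set \<Rightarrow> 'a gre \<Rightarrow> 'a list set" where
  "lang A Empty = {}"
| "lang A Eps = {[]}"
| "lang A (Atom a) = {[a]}"
| "lang A (Union e f) = lang A e \<union> lang A f"
| "lang A (Conc e f) = conc_lang (lang A e) (lang A f)"
| "lang A (Star e) = star_lang (lang A e)"
| "lang A (Compl e) = lists A - lang A e"

fun height :: "'a gre \<Rightarrow> nat" where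
  "height Empty = 0"
| "height Eps = 0"
| "height (Atom a) = 0"
| "height (Union e f) = max (height e) (height f)"
| "height (Conc e f) = max (height e) (height f)"
| "height (Star e) = height e + 1"
| "height (Compl e) = height e"

definition gen_star_height_le :: "'a set \<Rightarrow> 'a list set \<Rightarrow> nat \<Rightarrow> bool" where
  "gen_star_height_le A L k \<longleftrightarrow>
     (\<exists>E. atoms E \<subseteq> A \<and> lang A E = L \<and> height E \<le> k)"

end

theory Submission
  imports Defs
begin

text \<open>A non-zero element s = (i, g, \<lambda>) is the image of a word w iff every letter of w has a
  non-zero image, consecutive letters meet non-zero sandwich entries, the first letter has row i,
  the last has column \<lambda>, and the weight of w (the group entries of its letters plus the sandwich
  entries they meet) is g modulo n. All but the last condition are star-free: they forbid
  factors of length at most two and fix the first and last letter. The weight is a linear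
  combination of the numbers of occurrences of letters and of two-letter factors, so it suffices
  that, for each such factor m and residue r, one star defines the words with r occurrences of m
  modulo n. If m does not overlap itself, these words are (X m)^n* (X m)^r X, where X is the
  star-free set of words avoiding m; the self-overlapping factor aa is counted via the
  occurrences of a not followed by another letter or by the end of the word.\<close>

abbreviation sh_definable :: "'a set \<Rightarrow> nat \<Rightarrow> ('a list \<Rightarrow> bool) \<Rightarrow> bool" where
  "sh_definable A k P \<equiv> gen_star_height_le A {w \<in> lists A. P w} k"

lemma gen_star_height_le_empty: "gen_star_height_le A {} k"
  unfolding gen_star_height_le_def by (intro exI[of _ Empty]) simp

lemma gen_star_height_le_lists: "gen_star_height_le A (lists A) k"
  unfolding gen_star_height_le_def by (intro exI[of _ "Compl Empty"]) simp

lemma sh_definable_const: "sh_definable A k (\<lambda>w. C)"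
  by (cases C) (simp_all add: gen_star_height_le_empty gen_star_height_le_lists)

lemma sh_definable_Not:
  assumes "sh_definable A k P"
  shows "sh_definable A k (\<lambda>w. \<not> P w)"
proof -
  from assms obtain E where "atoms E \<subseteq> A" "lang A E = {w \<in> lists A. P w}" "height E \<le> k"
    unfolding gen_star_height_le_def by blast
  then show ?thesis unfolding gen_star_height_le_def by (intro exI[of _ "Compl E"]) auto
qed

lemma sh_definable_disj:
  assumes "sh_definable A k P" "sh_definable A k Q"
  shows "sh_definable A k (\<lambda>w. P w \<or> Q w)"
proof -
  from assms obtain E F where "atoms E \<subseteq> A" "lang A E = {w \<in> lists A. P w}" "height E \<le> k"
    "atoms F \<subseteq> A" "lang A F = {w \<in> lists A. Q w}" "height F \<le> k"
    unfolding gen_star_height_le_def by blast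
  then show ?thesis unfolding gen_star_height_le_def by (intro exI[of _ "Union E F"]) auto
qed

lemma sh_definable_cong:
  "(\<And>w. w \<in> lists A \<Longrightarrow> P w \<longleftrightarrow> Q w) \<Longrightarrow> sh_definable A k Q \<Longrightarrow> sh_definable A k P"
  by (metis (mono_tags, lifting) mem_Collect_eq set_eqI)

lemma sh_definable_conj:
  "sh_definable A k P \<Longrightarrow> sh_definable A k Q \<Longrightarrow> sh_definable A k (\<lambda>w. P w \<and> Q w)"
proof -
  assume "sh_definable A k P" "sh_definable A k Q"
  then have "sh_definable A k (\<lambda>w. \<not> (\<not> P w \<or> \<not> Q w))"
    by (intro sh_definable_Not sh_definable_disj)
  then show ?thesis by (rule sh_definable_cong[rotated]) simp
qed

lemma sh_definable_imp_const: "(C \<Longrightarrow> sh_definable A k R) \<Longrightarrow> sh_definable A k (\<lambda>w. C \<longrightarrow> R w)"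
  by (cases C) (simp_all add: gen_star_height_le_lists)

lemma sh_definable_bex:
  "finite S \<Longrightarrow> (\<And>s. s \<in> S \<Longrightarrow> sh_definable A k (R s)) \<Longrightarrow> sh_definable A k (\<lambda>w. \<exists>s\<in>S. R s w)"
proof (induction S rule: finite_induct)
  case empty
  then show ?case by (simp add: gen_star_height_le_empty)
next
  case (insert x F)
  then have "sh_definable A k (\<lambda>w. R x w \<or> (\<exists>s\<in>F. R s w))"
    by (intro sh_definable_disj) simp_all
  then show ?case by (rule sh_definable_cong[rotated]) simp
qed

lemma sh_definable_ball:
  "finite S \<Longrightarrow> (\<And>s. s \<in> S \<Longrightarrow> sh_definable A k (R s)) \<Longrightarrow> sh_definable A k (\<lambda>w. \<forall>s\<in>S. R s w)"
proof -
  assume "finite S" "\<And>s. s \<in> S \<Longrightarrow> sh_definable A k (R s)"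
  then have "sh_definable A k (\<lambda>w. \<not> (\<exists>s\<in>S. \<not> R s w))"
    by (intro sh_definable_Not sh_definable_bex) simp_all
  then show ?thesis by (rule sh_definable_cong[rotated]) simp
qed

fun factor_count :: "'a list \<Rightarrow> 'a list \<Rightarrow> nat" where
  "factor_count m [] = 0"
| "factor_count m (x # xs) = (if take (length m) (x # xs) = m then 1 else 0) + factor_count m xs"

lemma factor_count_pair_Cons:
  "factor_count [a, b] (x # xs) = (if x = a \<and> xs \<noteq> [] \<and> hd xs = b then 1 else 0) + factor_count [a, b] xs"
  by (cases xs) auto

lemma factor_count_pos: "m \<noteq> [] \<Longrightarrow> factor_count m (u @ m @ v) > 0"
  by (induction u) (cases m, auto)

lemma take_length_prefix: "take (length m) u = m \<Longrightarrow> take (length m) (u @ v) = m"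
proof -
  assume h: "take (length m) u = m"
  then have "length m \<le> length u" by (metis length_take min.absorb_iff1 min.commute)
  then show ?thesis using h by simp
qed

lemma first_factor_occurrence:
  "factor_count m w > 0 \<Longrightarrow> \<exists>u v. w = u @ m @ v \<and> factor_count m u = 0"
proof (induction w)
  case (Cons x xs)
  show ?case
  proof (cases "take (length m) (x # xs) = m")
    case True
    then have "x # xs = [] @ m @ drop (length m) (x # xs)"
      by (metis append_Nil append_take_drop_id)
    then show ?thesis by (intro exI[of _ "[]"] exI) simp
  next
    case False
    with Cons obtain u v where "xs = u @ m @ v" "factor_count m u = 0" by auto
    moreover from False this(1) have "take (length m) (x # u) \<noteq> m"
      using take_length_prefix[of m "x # u" "m @ v"] by auto
    ultimately show ?thesis by (intro exI[of _ "x # u"] exI[of _ v]) simp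
  qed
qed simp

lemma conc_lang_iff: "w \<in> conc_lang X Y \<longleftrightarrow> (\<exists>u v. w = u @ v \<and> u \<in> X \<and> v \<in> Y)"
  by (auto simp: conc_lang_def)

primrec word_expr :: "'a list \<Rightarrow> 'a gre" where
  "word_expr [] = Eps"
| "word_expr (a # m) = Conc (Atom a) (word_expr m)"

lemma word_expr_simps [simp]:
  "lang A (word_expr m) = {m}" "height (word_expr m) = 0" "atoms (word_expr m) = set m"
  by (induction m) (auto simp: conc_lang_def)

definition avoiding_expr :: "'a list \<Rightarrow> 'a gre" where
  "avoiding_expr m = Compl (Conc (Compl Empty) (Conc (word_expr m) (Compl Empty)))"

lemma avoiding_expr_simps [simp]: "height (avoiding_expr m) = 0" "atoms (avoiding_expr m) = set m"
  by (auto simp: avoiding_expr_def)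

lemma lang_avoiding_expr:
  assumes "m \<noteq> []" "set m \<subseteq> A"
  shows "lang A (avoiding_expr m) = {w \<in> lists A. factor_count m w = 0}"
proof -
  have "factor_count m w = 0 \<longleftrightarrow> (\<nexists>u v. w = u @ m @ v)" for w
    using factor_count_pos[OF assms(1)] first_factor_occurrence[of m w] by (metis gr0I less_irrefl)
  moreover have "w \<in> conc_lang (lists A) (conc_lang {m} (lists A)) \<longleftrightarrow> (\<exists>u v. w = u @ m @ v)"
    if "w \<in> lists A" for w
    using that unfolding conc_lang_def by auto blast
  ultimately show ?thesis by (auto simp: avoiding_expr_def)
qed

lemma sh_definable_factor_count_zero:
  "m \<noteq> [] \<Longrightarrow> set m \<subseteq> A \<Longrightarrow> sh_definable A k (\<lambda>w. factor_count m w = 0)"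
  unfolding gen_star_height_le_def
  by (intro exI[of _ "avoiding_expr m"]) (simp add: lang_avoiding_expr)

fun occurrences_expr :: "'a list \<Rightarrow> nat \<Rightarrow> 'a gre" where
  "occurrences_expr m 0 = Eps"
| "occurrences_expr m (Suc k) =
     Conc (Conc (avoiding_expr m) (word_expr m)) (occurrences_expr m k)"

lemma height_occurrences_expr [simp]: "height (occurrences_expr m k) = 0"
  by (induction k) auto

lemma atoms_occurrences_expr: "atoms (occurrences_expr m k) \<subseteq> set m"
  by (induction k) auto

definition mod_expr :: "'a list \<Rightarrow> nat \<Rightarrow> nat \<Rightarrow> 'a gre" where
  "mod_expr m n r = Conc (Star (occurrences_expr m n)) (Conc (occurrences_expr m r) (avoiding_expr m))"

text \<open>Additivity of the occurrence count holds when m has no proper border (a non-empty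
  proper prefix that is also a suffix), e.g. for a single letter or two distinct letters.\<close>
locale unbordered_factor =
  fixes A :: "'a set" and m :: "'a list"
  assumes nonempty: "m \<noteq> []" and alphabet: "set m \<subseteq> A"
    and factor_count_additive:
      "\<And>u v. factor_count m (u @ m @ v) = factor_count m u + 1 + factor_count m v"
begin

lemma occurrences_exprD:
  "v \<in> lang A (occurrences_expr m k) \<Longrightarrow>
     v \<in> lists A \<and> (\<forall>z. factor_count m (v @ z) = k + factor_count m z)"
proof (induction k arbitrary: v)
  case (Suc k)
  then obtain u v' where "v = (u @ m) @ v'" "u \<in> lists A" "factor_count m u = 0"
    "v' \<in> lang A (occurrences_expr m k)"
    by (force simp: conc_lang_def lang_avoiding_expr[OF nonempty alphabet])
  with Suc.IH alphabet factor_count_additive[of u "v' @ _"] show ?case by auto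
qed simp

lemma occurrences_expr_prefix:
  "w \<in> lists A \<Longrightarrow> k \<le> factor_count m w \<Longrightarrow>
     \<exists>v z. w = v @ z \<and> v \<in> lang A (occurrences_expr m k) \<and> z \<in> lists A
       \<and> factor_count m z = factor_count m w - k"
proof (induction k arbitrary: w)
  case 0
  then show ?case by (intro exI[of _ "[]"] exI[of _ w]) simp
next
  case (Suc k)
  then obtain u w' where w: "w = u @ m @ w'" "factor_count m u = 0"
    using first_factor_occurrence by (metis Suc_le_lessD gr_zeroI not_less0)
  then have count: "factor_count m w = Suc (factor_count m w')"
    using factor_count_additive by simp
  with Suc.prems w obtain v z where vz: "w' = v @ z" "v \<in> lang A (occurrences_expr m k)"
    "z \<in> lists A" "factor_count m z = factor_count m w' - k"
    using Suc.IH[of w'] by auto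
  have "u \<in> lang A (avoiding_expr m)"
    using w Suc.prems by (simp add: lang_avoiding_expr[OF nonempty alphabet])
  with vz(2) have "(u @ m) @ v \<in> lang A (occurrences_expr m (Suc k))"
    unfolding occurrences_expr.simps lang.simps conc_lang_iff word_expr_simps
    by (intro exI[of _ "u @ m"] exI[of _ v]) auto
  with vz w count show ?case by (intro exI[of _ "(u @ m) @ v"] exI[of _ z]) auto
qed

lemma star_occurrences_exprD:
  "s \<in> star_lang (lang A (occurrences_expr m n)) \<Longrightarrow>
     s \<in> lists A \<and> (\<exists>j. \<forall>z. factor_count m (s @ z) = n * j + factor_count m z)"
proof (induction rule: star_lang.induct)
  case star_nil
  then show ?case by (intro conjI exI[of _ 0]) auto
next
  case (star_app u v)
  then obtain j where "\<forall>z. factor_count m (v @ z) = n * j + factor_count m z" by blast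
  with star_app occurrences_exprD[OF star_app(1)] show ?case
    by (intro conjI exI[of _ "Suc j"]) auto
qed

lemma mod_expr_sound:
  "w \<in> lang A (mod_expr m n r) \<Longrightarrow> w \<in> lists A \<and> factor_count m w mod n = r mod n"
proof -
  assume "w \<in> lang A (mod_expr m n r)"
  then obtain s v c where w: "w = s @ v @ c" "s \<in> star_lang (lang A (occurrences_expr m n))"
    "v \<in> lang A (occurrences_expr m r)" "c \<in> lists A" "factor_count m c = 0"
    by (auto simp: mod_expr_def conc_lang_def lang_avoiding_expr[OF nonempty alphabet])
  with star_occurrences_exprD[OF w(2)] occurrences_exprD[OF w(3)] show ?thesis by auto
qed

lemma mod_expr_complete:
  "w \<in> lists A \<Longrightarrow> factor_count m w = n * j + r \<Longrightarrow> w \<in> lang A (mod_expr m n r)"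
proof (induction j arbitrary: w)
  case 0
  then obtain v z where "w = v @ z" "v \<in> lang A (occurrences_expr m r)"
    "z \<in> lang A (avoiding_expr m)"
    using occurrences_expr_prefix[of w r] by (auto simp: lang_avoiding_expr[OF nonempty alphabet])
  moreover have "[] \<in> star_lang (lang A (occurrences_expr m n))" by (rule star_nil)
  ultimately show ?case
    unfolding mod_expr_def lang.simps conc_lang_iff by (metis append_Nil)
next
  case (Suc j)
  then obtain v z where vz: "w = v @ z" "v \<in> lang A (occurrences_expr m n)"
    "z \<in> lists A" "factor_count m z = n * j + r"
    using occurrences_expr_prefix[of w n] by auto
  then obtain s t where "z = s @ t" "s \<in> star_lang (lang A (occurrences_expr m n))"
    "t \<in> lang A (Conc (occurrences_expr m r) (avoiding_expr m))"
    using Suc.IH[of z] unfolding mod_expr_def lang.simps(5,6) conc_lang_iff by blast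
  moreover from vz(2) this(2) have "v @ s \<in> star_lang (lang A (occurrences_expr m n))"
    by (rule star_app)
  ultimately show ?case
    unfolding mod_expr_def lang.simps(5,6) conc_lang_iff[of _ "star_lang _"] using vz(1)
    by (intro exI[of _ "v @ s"] exI[of _ t]) simp
qed

lemma sh_definable_factor_count_mod:
  assumes "n \<ge> 1"
  shows "sh_definable A 1 (\<lambda>w. factor_count m w mod n = r)"
proof (cases "r < n")
  case False
  with assms have "{w \<in> lists A. factor_count m w mod n = r} = {}"
    using mod_less_divisor[of n] by (auto simp: not_less dest: leD)
  then show ?thesis by (simp only: gen_star_height_le_empty)
next
  case True
  have "lang A (mod_expr m n r) = {w \<in> lists A. factor_count m w mod n = r}"
  proof (intro set_eqI iffI)
    fix w
    assume "w \<in> {w \<in> lists A. factor_count m w mod n = r}"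
    then have "w \<in> lists A" "factor_count m w = n * (factor_count m w div n) + r"
      by (auto simp only: mem_Collect_eq) (metis mult_div_mod_eq)
    then show "w \<in> lang A (mod_expr m n r)" by (rule mod_expr_complete)
  qed (use mod_expr_sound True in auto)
  moreover have "atoms (mod_expr m n r) \<subseteq> A" "height (mod_expr m n r) \<le> 1"
    using alphabet by (auto simp: mod_expr_def dest: atoms_occurrences_expr[THEN subsetD])
  ultimately show ?thesis unfolding gen_star_height_le_def by blast
qed

end

definition mod_definable :: "'a set \<Rightarrow> nat \<Rightarrow> ('a list \<Rightarrow> nat) \<Rightarrow> bool" where
  "mod_definable A n f \<longleftrightarrow> (\<forall>r. sh_definable A 1 (\<lambda>w. f w mod n = r))"

lemma mod_definable_const: "mod_definable A n (\<lambda>w. c)"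
  unfolding mod_definable_def by (blast intro: sh_definable_const)

lemma mod_definable_cong:
  "mod_definable A n g \<Longrightarrow> (\<And>w. w \<in> lists A \<Longrightarrow> f w mod n = g w mod n) \<Longrightarrow> mod_definable A n f"
  unfolding mod_definable_def
proof
  fix r
  assume g: "\<forall>r. sh_definable A 1 (\<lambda>w. g w mod n = r)"
    and fg: "\<And>w. w \<in> lists A \<Longrightarrow> f w mod n = g w mod n"
  show "sh_definable A 1 (\<lambda>w. f w mod n = r)"
    by (rule sh_definable_cong[OF _ g[rule_format]]) (simp add: fg)
qed

lemma mod_definable_add:
  assumes "n \<ge> 1" "mod_definable A n f" "mod_definable A n g"
  shows "mod_definable A n (\<lambda>w. f w + g w)"
  unfolding mod_definable_def
proof
  fix r
  have "sh_definable A 1 (\<lambda>w. \<exists>r1\<in>{..<n}. \<exists>r2\<in>{..<n}.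
          (f w mod n = r1 \<and> g w mod n = r2) \<and> (r1 + r2) mod n = r)"
    using assms(2,3) unfolding mod_definable_def
    by (intro sh_definable_bex sh_definable_conj sh_definable_const) auto
  moreover have "(f w + g w) mod n = r \<longleftrightarrow> (\<exists>r1\<in>{..<n}. \<exists>r2\<in>{..<n}.
          (f w mod n = r1 \<and> g w mod n = r2) \<and> (r1 + r2) mod n = r)" for w
  proof
    assume "(f w + g w) mod n = r"
    with assms(1) show "\<exists>r1\<in>{..<n}. \<exists>r2\<in>{..<n}. (f w mod n = r1 \<and> g w mod n = r2) \<and> (r1 + r2) mod n = r"
      by (intro bexI[of _ "f w mod n"] bexI[of _ "g w mod n"]) (simp_all add: mod_add_eq)
  qed (auto simp: mod_add_eq)
  ultimately show "sh_definable A 1 (\<lambda>w. (f w + g w) mod n = r)"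
    by (rule sh_definable_cong[rotated])
qed

lemma mod_definable_mult: "n \<ge> 1 \<Longrightarrow> mod_definable A n f \<Longrightarrow> mod_definable A n (\<lambda>w. c * f w)"
  by (induction c) (simp_all add: mod_definable_const mod_definable_add)

lemma mod_definable_sum:
  assumes "n \<ge> 1"
  shows "finite S \<Longrightarrow> (\<And>s. s \<in> S \<Longrightarrow> mod_definable A n (f s)) \<Longrightarrow>
     mod_definable A n (\<lambda>w. \<Sum>s\<in>S. f s w)"
  by (induction S rule: finite_induct) (auto simp: mod_definable_const intro!: mod_definable_add[OF assms])

lemma mod_definable_indicator:
  assumes "sh_definable A 1 P"
  shows "mod_definable A n (\<lambda>w. if P w then 1 else 0)"
  unfolding mod_definable_def
proof
  fix r
  have "sh_definable A 1 (\<lambda>w. (P w \<and> 1 mod n = r) \<or> (\<not> P w \<and> 0 mod n = r))"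
    using assms by (intro sh_definable_disj sh_definable_conj sh_definable_Not sh_definable_const)
  then show "sh_definable A 1 (\<lambda>w. (if P w then 1 else 0) mod n = r)"
    by (rule sh_definable_cong[rotated]) simp
qed

lemma mod_definable_factor_count:
  "unbordered_factor A m \<Longrightarrow> n \<ge> 1 \<Longrightarrow> mod_definable A n (factor_count m)"
  unfolding mod_definable_def by (blast intro: unbordered_factor.sh_definable_factor_count_mod)

lemma unbordered_factor_letter: "a \<in> A \<Longrightarrow> unbordered_factor A [a]"
proof
  show "factor_count [a] (u @ [a] @ v) = factor_count [a] u + 1 + factor_count [a] v" for u v
    by (induction u) auto
qed simp_all

lemma unbordered_factor_pair: "a \<in> A \<Longrightarrow> b \<in> A \<Longrightarrow> a \<noteq> b \<Longrightarrow> unbordered_factor A [a, b]"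
proof
  assume "a \<noteq> b"
  show "factor_count [a, b] (u @ [a, b] @ v) = factor_count [a, b] u + 1 + factor_count [a, b] v" for u v
  proof (induction u)
    case Nil
    with \<open>a \<noteq> b\<close> show ?case by (simp add: factor_count_pair_Cons)
  next
    case (Cons x u)
    with \<open>a \<noteq> b\<close> show ?case by (cases u) (simp_all add: factor_count_pair_Cons)
  qed
qed simp_all

lemma factor_count_letter_eq_sum:
  assumes "finite A"
  shows "w \<in> lists A \<Longrightarrow>
    factor_count [a] w = (\<Sum>b\<in>A. factor_count [a, b] w) + (if w \<noteq> [] \<and> last w = a then 1 else 0)"
proof (induction w)
  case (Cons y w)
  then have "w \<in> lists A" by simp
  have "(\<Sum>b\<in>A. factor_count [a, b] (y # w)) =
    (if y = a \<and> w \<noteq> [] then 1 else 0) + (\<Sum>b\<in>A. factor_count [a, b] w)"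
  proof (cases w)
    case (Cons z w')
    with \<open>w \<in> lists A\<close> have "z \<in> A" by simp
    with Cons assms show ?thesis by (simp add: sum.distrib sum.delta)
  qed simp
  with Cons show ?case by (cases w) auto
qed simp

lemma sh_definable_last: "a \<in> A \<Longrightarrow> sh_definable A k (\<lambda>w. w \<noteq> [] \<and> last w = a)"
  unfolding gen_star_height_le_def
proof (intro exI[of _ "Conc (Compl Empty) (Atom a)"] conjI)
  assume "a \<in> A"
  then show "lang A (Conc (Compl Empty) (Atom a)) = {w \<in> lists A. w \<noteq> [] \<and> last w = a}"
  proof (intro set_eqI iffI)
    fix w
    assume "w \<in> {w \<in> lists A. w \<noteq> [] \<and> last w = a}"
    then have "w = butlast w @ [a]" "butlast w \<in> lists A"
      by (auto dest: in_set_butlastD)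
    then show "w \<in> lang A (Conc (Compl Empty) (Atom a))"
      unfolding lang.simps conc_lang_iff by blast
  qed (auto simp: conc_lang_iff)
qed simp_all

lemma sh_definable_hd: "a \<in> A \<Longrightarrow> sh_definable A k (\<lambda>w. w \<noteq> [] \<and> hd w = a)"
  unfolding gen_star_height_le_def
proof (intro exI[of _ "Conc (Atom a) (Compl Empty)"] conjI)
  assume "a \<in> A"
  then show "lang A (Conc (Atom a) (Compl Empty)) = {w \<in> lists A. w \<noteq> [] \<and> hd w = a}"
    by (auto simp: conc_lang_iff neq_Nil_conv)
qed simp_all

text \<open>The factor aa overlaps itself, so it is counted indirectly: modulo n,
  the occurrences of aa are those of a minus those followed by another letter or by the end.\<close>
lemma mod_definable_pair_count:
  assumes "n \<ge> 1" "finite A" "a \<in> A" "b \<in> A"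
  shows "mod_definable A n (factor_count [a, b])"
proof (cases "a = b")
  case False
  with assms show ?thesis by (intro mod_definable_factor_count unbordered_factor_pair)
next
  case True
  define R where "R w = (\<Sum>c\<in>A - {a}. factor_count [a, c] w) + (if w \<noteq> [] \<and> last w = a then 1 else 0)"
    for w
  have "mod_definable A n R"
    unfolding R_def using assms
    by (intro mod_definable_add mod_definable_sum mod_definable_indicator sh_definable_last
        mod_definable_factor_count unbordered_factor_pair) auto
  then have "mod_definable A n (\<lambda>w. factor_count [a] w + (n - 1) * R w)"
    using assms by (intro mod_definable_add mod_definable_mult mod_definable_factor_count
        unbordered_factor_letter)
  moreover have "factor_count [a] w + (n - 1) * R w = factor_count [a, a] w + n * R w"
    if "w \<in> lists A" for w
  proof -
    have "factor_count [a] w = factor_count [a, a] w + R w"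
      using factor_count_letter_eq_sum[OF assms(2) that] sum.remove[OF assms(2,3)]
      by (simp add: R_def)
    with assms(1) show ?thesis by (cases n) simp_all
  qed
  ultimately show ?thesis
    using True by (elim mod_definable_cong) simp
qed

definition row :: "('a \<Rightarrow> ('i, 'l) rees_elt) \<Rightarrow> 'a \<Rightarrow> 'i" where
  "row phi a = fst (the (phi a))"

definition entry :: "('a \<Rightarrow> ('i, 'l) rees_elt) \<Rightarrow> 'a \<Rightarrow> nat" where
  "entry phi a = fst (snd (the (phi a)))"

definition col :: "('a \<Rightarrow> ('i, 'l) rees_elt) \<Rightarrow> 'a \<Rightarrow> 'l" where
  "col phi a = snd (snd (the (phi a)))"

text \<open>Junk value 0 when the sandwich entry is the zero symbol.\<close>
definition link :: "('l \<Rightarrow> 'i \<Rightarrow> nat option) \<Rightarrow> ('a \<Rightarrow> ('i, 'l) rees_elt) \<Rightarrow> 'a \<Rightarrow> 'a \<Rightarrow> nat" where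
  "link P phi a b = (case P (col phi a) (row phi b) of None \<Rightarrow> 0 | Some p \<Rightarrow> p)"

primrec nonzero_word :: "('l \<Rightarrow> 'i \<Rightarrow> nat option) \<Rightarrow> ('a \<Rightarrow> ('i, 'l) rees_elt) \<Rightarrow> 'a list \<Rightarrow> bool" where
  "nonzero_word P phi [] = True"
| "nonzero_word P phi (a # w) \<longleftrightarrow> phi a \<noteq> None
     \<and> (w \<noteq> [] \<longrightarrow> P (col phi a) (row phi (hd w)) \<noteq> None) \<and> nonzero_word P phi w"

primrec weight :: "('l \<Rightarrow> 'i \<Rightarrow> nat option) \<Rightarrow> ('a \<Rightarrow> ('i, 'l) rees_elt) \<Rightarrow> 'a list \<Rightarrow> nat" where
  "weight P phi [] = 0"
| "weight P phi (a # w) = entry phi a + (if w = [] then 0 else link P phi a (hd w)) + weight P phi w"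

lemma phibar_eq:
  "(\<And>a. a \<in> set w \<Longrightarrow> phi a \<noteq> None \<Longrightarrow> entry phi a < n) \<Longrightarrow> w \<noteq> [] \<Longrightarrow>
    phibar n P phi w = (if nonzero_word P phi w
      then Some (row phi (hd w), weight P phi w mod n, col phi (last w)) else None)"
proof (induction n P phi w rule: phibar.induct)
  case (2 n P phi a)
  then show ?case by (cases "phi a") (auto simp: row_def entry_def col_def)
next
  case (3 n P phi a b w)
  then show ?case
    by (cases "phi a")
      (auto simp: row_def entry_def col_def link_def mod_add_right_eq split: option.split)
qed simp

lemma weight_eq_sum:
  assumes "finite A"
  shows "w \<in> lists A \<Longrightarrow> weight P phi w =
    (\<Sum>a\<in>A. entry phi a * factor_count [a] w)
    + (\<Sum>a\<in>A. \<Sum>b\<in>A. link P phi a b * factor_count [a, b] w)"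
proof (induction w)
  case (Cons y w)
  then have "y \<in> A" "w \<in> lists A" by simp_all
  have "(\<Sum>a\<in>A. \<Sum>b\<in>A. link P phi a b * factor_count [a, b] (y # w)) =
    (if w = [] then 0 else link P phi y (hd w))
    + (\<Sum>a\<in>A. \<Sum>b\<in>A. link P phi a b * factor_count [a, b] w)"
  proof (cases w)
    case (Cons z w')
    with \<open>w \<in> lists A\<close> have "z \<in> A" by simp
    with Cons \<open>y \<in> A\<close> assms show ?thesis
      by (simp add: factor_count_pair_Cons distrib_left sum.distrib if_distrib[of "(*) _"]
          conj_commute[of "y = _"] if_if_eq_conj[symmetric] sum.delta' cong: if_cong)
  qed simp
  with Cons \<open>y \<in> A\<close> assms show ?case
    by (simp add: distrib_left sum.distrib if_distrib[of "(*) _"] sum.delta' cong: if_cong)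
qed simp

lemma factor_count_pair_Cons_eq_0:
  "factor_count [a, b] (y # w) = 0 \<longleftrightarrow> \<not> (y = a \<and> w \<noteq> [] \<and> hd w = b) \<and> factor_count [a, b] w = 0"
  by (simp only: factor_count_pair_Cons) simp

lemma nonzero_word_iff:
  "w \<in> lists A \<Longrightarrow> nonzero_word P phi w \<longleftrightarrow>
    (\<forall>a\<in>A. phi a = None \<longrightarrow> factor_count [a] w = 0)
    \<and> (\<forall>a\<in>A. \<forall>b\<in>A. P (col phi a) (row phi b) = None \<longrightarrow> factor_count [a, b] w = 0)"
proof (induction w)
  case (Cons y w)
  then have "y \<in> A" "w \<in> lists A" by simp_all
  have letters: "(\<forall>a\<in>A. phi a = None \<longrightarrow> factor_count [a] (y # w) = 0) \<longleftrightarrow>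
    phi y \<noteq> None \<and> (\<forall>a\<in>A. phi a = None \<longrightarrow> factor_count [a] w = 0)"
    using \<open>y \<in> A\<close> by auto
  have pairs: "(\<forall>a\<in>A. \<forall>b\<in>A. P (col phi a) (row phi b) = None \<longrightarrow> factor_count [a, b] (y # w) = 0)
    \<longleftrightarrow> (w \<noteq> [] \<longrightarrow> P (col phi y) (row phi (hd w)) \<noteq> None)
      \<and> (\<forall>a\<in>A. \<forall>b\<in>A. P (col phi a) (row phi b) = None \<longrightarrow> factor_count [a, b] w = 0)"
  proof -
    have "w \<noteq> [] \<Longrightarrow> hd w \<in> A" using \<open>w \<in> lists A\<close> by (cases w) simp_all
    with \<open>y \<in> A\<close> show ?thesis unfolding factor_count_pair_Cons_eq_0 by auto
  qed
  show ?case
    unfolding nonzero_word.simps letters pairs Cons.IH[OF \<open>w \<in> lists A\<close>] by argo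
qed simp

lemma sh_definable_hd_in: "finite B \<Longrightarrow> B \<subseteq> A \<Longrightarrow> sh_definable A k (\<lambda>w. w \<noteq> [] \<and> hd w \<in> B)"
  by (rule sh_definable_cong[OF _ sh_definable_bex[where R = "\<lambda>a w. w \<noteq> [] \<and> hd w = a"]])
    (auto intro: sh_definable_hd)

lemma sh_definable_last_in: "finite B \<Longrightarrow> B \<subseteq> A \<Longrightarrow> sh_definable A k (\<lambda>w. w \<noteq> [] \<and> last w \<in> B)"
  by (rule sh_definable_cong[OF _ sh_definable_bex[where R = "\<lambda>a w. w \<noteq> [] \<and> last w = a"]])
    (auto intro: sh_definable_last)

lemma sh_definable_nonzero_word: "finite A \<Longrightarrow> sh_definable A k (nonzero_word P phi)"
  by (rule sh_definable_cong[OF nonzero_word_iff[of _ A]], assumption)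
    (intro sh_definable_conj sh_definable_ball sh_definable_imp_const
      sh_definable_factor_count_zero; simp)

lemma mod_definable_weight:
  assumes "n \<ge> 1" "finite A"
  shows "mod_definable A n (weight P phi)"
proof -
  have "mod_definable A n (\<lambda>w. (\<Sum>a\<in>A. entry phi a * factor_count [a] w)
      + (\<Sum>a\<in>A. \<Sum>b\<in>A. link P phi a b * factor_count [a, b] w))"
    using assms by (intro mod_definable_add mod_definable_sum mod_definable_mult
        mod_definable_factor_count unbordered_factor_letter mod_definable_pair_count; simp)
  then show ?thesis by (rule mod_definable_cong) (simp add: weight_eq_sum[OF assms(2)])
qed

lemma phibar_eq_Some_iff:
  "(\<And>a. a \<in> set w \<Longrightarrow> phi a \<noteq> None \<Longrightarrow> entry phi a < n) \<Longrightarrow> w \<noteq> [] \<Longrightarrow>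
    phibar n P phi w = Some (i, g, l) \<longleftrightarrow> row phi (hd w) = i \<and> col phi (last w) = l
      \<and> nonzero_word P phi w \<and> weight P phi w mod n = g"
  by (subst phibar_eq) auto

lemma phibar_preimage_eq:
  assumes "\<And>a. a \<in> A \<Longrightarrow> phi a \<noteq> None \<Longrightarrow> entry phi a < n"
  shows "{w \<in> plus_words A. phibar n P phi w = Some (i, g, l)} = {w \<in> lists A.
      ((w \<noteq> [] \<and> hd w \<in> {a \<in> A. row phi a = i}) \<and> (w \<noteq> [] \<and> last w \<in> {a \<in> A. col phi a = l}))
      \<and> (nonzero_word P phi w \<and> weight P phi w mod n = g)}" (is "_ = {w \<in> lists A. ?Q w}")
proof (intro Collect_cong)
  fix w
  show "w \<in> plus_words A \<and> phibar n P phi w = Some (i, g, l) \<longleftrightarrow> w \<in> lists A \<and> ?Q w"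
  proof (cases "w \<in> lists A \<and> w \<noteq> []")
    case True
    then have "entry phi a < n" if "a \<in> set w" "phi a \<noteq> None" for a
      using assms that by auto
    from phibar_eq_Some_iff[OF this] True show ?thesis by (auto simp: plus_words_def)
  qed (auto simp: plus_words_def)
qed

theorem lemma3p2:
  fixes n :: nat and I :: "'i set" and L :: "'l set"
    and P :: "'l \<Rightarrow> 'i \<Rightarrow> nat option"
    and A :: "'a set" and phi :: "'a \<Rightarrow> ('i, 'l) rees_elt"
  assumes "n \<ge> 1" and "I \<noteq> {}" and "L \<noteq> {}"
    and "valid_sandwich n I L P"
    and "finite A"
    and "\<forall>a\<in>A. phi a \<in> rees_carrier n I L"
    and "s \<in> rees_carrier n I L" and "s \<noteq> None"
  shows "gen_star_height_le A {w \<in> plus_words A. phibar n P phi w = s} 1"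
proof -
  obtain i g l where s: "s = Some (i, g, l)" using assms(8) by auto
  have "entry phi a < n" if "a \<in> A" "phi a \<noteq> None" for a
    using assms(6) that by (auto simp: rees_carrier_def entry_def)
  then have preimage: "{w \<in> plus_words A. phibar n P phi w = s} = {w \<in> lists A.
      ((w \<noteq> [] \<and> hd w \<in> {a \<in> A. row phi a = i}) \<and> (w \<noteq> [] \<and> last w \<in> {a \<in> A. col phi a = l}))
      \<and> (nonzero_word P phi w \<and> weight P phi w mod n = g)}"
    unfolding s by (rule phibar_preimage_eq)
  have "sh_definable A 1 (\<lambda>w. weight P phi w mod n = g)"
    using mod_definable_weight[OF assms(1,5)] unfolding mod_definable_def by blast
  with assms(5) show ?thesis
    unfolding preimage
    by (intro sh_definable_conj sh_definable_hd_in sh_definable_last_in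
        sh_definable_nonzero_word) simp_all
qed

end
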